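(* Let $f:\mathbb{R}\to\mathbb{R}$ be a differentiable function which is nowhere monotone. Then the set $D_{f'}$ of discontinuity points of its derivative $f'$ is not a closed subset of $\mathbb{R}$.
   Context: A function $f:\mathbb{R}\to\mathbb{R}$ is nowhere monotone if there is no nondegenerate interval $I\subseteq\mathbb{R}$ on which $f$ is monotone (nondecreasing or nonincreasing); equivalently, in every such interval there are points $x_1<y_1$ with $f(x_1)<f(y_1)$ and points $x_2<y_2$ with $f(x_2)>f(y_2)$. *)

theory Defs
  imports "HOL-Analysis.Analysis"
begin

definition nowhere_monotone :: "(real \<Rightarrow> real) \<Rightarrow> bool" where
  "nowhere_monotone f \<longleftrightarrow>
     \<not> (\<exists>I::real set. is_interval I \<and> (\<exists>x\<in>I. \<exists>y\<in>I. x < y) \<and>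
          (mono_on I f \<or> antimono_on I f))"

end

theory Submission
  imports Defs
begin

text \<open>A derivative is the pointwise limit of the continuous difference quotients
  \<open>n (f (x + 1/n) - f x)\<close>, i.e. it is of Baire class one, so by the Baire category theorem
  it has a point of continuity. If its set of discontinuity points were closed, the
  continuity points would form a nonempty open set, hence contain an interval. At a
  continuity point \<open>x\<close> with \<open>f' x \<noteq> 0\<close> the derivative keeps its sign nearby and \<open>f\<close> is
  monotone there; so \<open>f'\<close> vanishes on the whole interval, and \<open>f\<close> is constant on it.
  Either way \<open>f\<close> is monotone on a nondegenerate interval.\<close>

lemma derivative_is_limit_of_continuous:
  fixes f g :: "real \<Rightarrow> real"
  assumes der: "\<And>x. (f has_real_derivative g x) (at x)"
  obtains h :: "nat \<Rightarrow> real \<Rightarrow> real"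
  where "\<And>n. continuous_on UNIV (h n)" and "\<And>x. (\<lambda>n. h n x) \<longlonglongrightarrow> g x"
proof -
  define h where "h n x = (f (x + inverse (real (Suc n))) - f x) / inverse (real (Suc n))" for n x
  have "continuous_on UNIV f"
    using der by (meson DERIV_continuous continuous_at_imp_continuous_on)
  then have cont: "continuous_on UNIV (h n)" for n
    unfolding h_def by (intro continuous_intros continuous_on_compose2[OF \<open>continuous_on UNIV f\<close>]) auto
  have lim: "(\<lambda>n. h n x) \<longlonglongrightarrow> g x" for x
  proof -
    have quotient: "((\<lambda>t. (f (x + t) - f x) / t) \<longlongrightarrow> g x) (at 0)"
      using der DERIV_def by blast
    have "filterlim (\<lambda>n. inverse (real (Suc n))) (at 0) sequentially"
      by (rule filterlim_atI[OF LIMSEQ_inverse_real_of_nat]) simp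
    from filterlim_compose[OF quotient this] show ?thesis
      unfolding h_def by (simp add: o_def)
  qed
  from cont lim show thesis by (rule that)
qed

text \<open>The Baire category argument: the closed sets \<open>G N\<close> on which the sequence has
  settled to within \<open>e/3\<close> after \<open>N\<close> cover the closed ball, so one of them contains a
  smaller ball; there \<open>g\<close> is \<open>e/3\<close>-close to the continuous \<open>h N\<close>.\<close>

lemma pointwise_limit_of_continuous_small_oscillation:
  fixes h :: "nat \<Rightarrow> 'a::{real_normed_vector,heine_borel} \<Rightarrow> 'b::metric_space"
  assumes hc: "\<And>n. continuous_on UNIV (h n)" and hlim: "\<And>x. (\<lambda>n. h n x) \<longlonglongrightarrow> g x"
    and e: "e > 0" and r: "r > 0"
  obtains c d where "ball c d \<subseteq> ball m r" "d > 0"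
    "\<And>y z. y \<in> ball c d \<Longrightarrow> z \<in> ball c d \<Longrightarrow> dist (g y) (g z) < e"
proof -
  define G where "G N = (\<Inter>j\<in>{N..}. {x. dist (h j x) (h N x) \<le> e/3})" for N
  have G_closed: "closed (G N)" for N
    unfolding G_def by (intro closed_INT ballI closed_Collect_le continuous_intros hc)
  have G_cover: "\<exists>N. x \<in> G N" for x
  proof -
    obtain M where "\<forall>i\<ge>M. \<forall>j\<ge>M. dist (h i x) (h j x) < e/3"
      using metric_CauchyD[OF LIMSEQ_imp_Cauchy[OF hlim[of x]], of "e/3"] e by auto
    then show ?thesis unfolding G_def by (intro exI[of _ M]) force
  qed
  define S where "S = cball m (r/2)"
  have "\<exists>N. \<not> S \<subseteq> closure (S - G N)"
  proof (rule ccontr)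
    assume dense: "\<not> ?thesis"
    have "S \<subseteq> closure (\<Inter> (range (\<lambda>N. S - G N)))"
    proof (rule Baire)
      fix T assume "T \<in> range (\<lambda>N. S - G N)"
      then obtain N where "T = S - G N" by auto
      moreover have "openin (top_of_set S) (S - G N)"
        using G_closed by (simp add: Diff_eq openin_open_Int open_Compl)
      moreover have "S \<subseteq> closure (S - G N)" using dense by blast
      ultimately show "openin (top_of_set S) T \<and> S \<subseteq> closure T" by simp
    qed (auto simp: S_def)
    moreover have "\<Inter> (range (\<lambda>N. S - G N)) = {}" using G_cover by auto
    ultimately have "S = {}" by (metis closure_empty subset_empty)
    moreover have "m \<in> S" using r by (simp add: S_def)
    ultimately show False by simp
  qed
  then obtain N y0 where "y0 \<in> S" "y0 \<notin> closure (S - G N)" by blast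
  then obtain \<epsilon> where \<epsilon>: "\<epsilon> > 0" and far: "\<And>z. z \<in> S - G N \<Longrightarrow> \<epsilon> \<le> dist z y0"
    unfolding closure_approachable by (auto simp: not_less)
  have "y0 \<in> closure (ball m (r/2))" using \<open>y0 \<in> S\<close> r by (simp add: S_def)
  then obtain c where c: "c \<in> ball m (r/2)" "dist c y0 < \<epsilon>"
    using \<epsilon> unfolding closure_approachable by blast
  define d0 where "d0 = min (\<epsilon> - dist c y0) (r/2 - dist m c)"
  have "d0 > 0" using c by (simp add: d0_def)
  have ball_d0: "ball c d0 \<subseteq> ball m (r/2)" "ball c d0 \<subseteq> G N"
  proof -
    show sub: "ball c d0 \<subseteq> ball m (r/2)"
    proof
      fix z assume "z \<in> ball c d0"
      then have "dist c z < r/2 - dist m c" by (simp add: d0_def)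
      then show "z \<in> ball m (r/2)" using dist_triangle[of m z c] by simp
    qed
    have "dist z y0 < \<epsilon>" if "z \<in> ball c d0" for z
      using that dist_triangle[of z y0 c] by (simp add: d0_def dist_commute)
    then show "ball c d0 \<subseteq> G N"
      using sub far by (force simp: S_def)
  qed
  have g_close: "dist (g z) (h N z) \<le> e/3" if "z \<in> ball c d0" for z
  proof (rule LIMSEQ_le_const2[OF tendsto_dist[OF hlim tendsto_const]])
    show "\<exists>M. \<forall>j\<ge>M. dist (h j z) (h N z) \<le> e/3"
      using ball_d0(2) that unfolding G_def by blast
  qed
  have "isCont (h N) c" using hc[of N] by (simp add: continuous_on_eq_continuous_at)
  then obtain d1 where d1: "d1 > 0" "\<And>x. dist x c < d1 \<Longrightarrow> dist (h N x) (h N c) < e/6"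
    using e unfolding continuous_at_eps_delta by (meson divide_pos_pos zero_less_numeral)
  show thesis
  proof
    show "min d0 d1 > 0" using \<open>d0 > 0\<close> d1(1) by simp
    show "ball c (min d0 d1) \<subseteq> ball m r" using ball_d0(1) r by auto
    fix y z assume "y \<in> ball c (min d0 d1)" "z \<in> ball c (min d0 d1)"
    then have "dist (g y) (h N y) \<le> e/3" "dist (g z) (h N z) \<le> e/3"
      "dist (h N y) (h N c) < e/6" "dist (h N z) (h N c) < e/6"
      using g_close d1(2)[of y] d1(2)[of z] by (auto simp: dist_commute)
    moreover have "dist (g y) (g z) \<le> dist (g y) (h N y) + dist (h N y) (h N c)
        + dist (h N z) (h N c) + dist (g z) (h N z)"
      using dist_triangle[of "g y" "g z" "h N y"] dist_triangle[of "h N y" "g z" "h N c"]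
        dist_triangle[of "h N c" "g z" "h N z"]
      by (simp add: dist_commute)
    ultimately show "dist (g y) (g z) < e" by linarith
  qed
qed

lemma pointwise_limit_of_continuous_has_continuity_point:
  fixes h :: "nat \<Rightarrow> 'a::{real_normed_vector,heine_borel} \<Rightarrow> 'b::metric_space"
  assumes hc: "\<And>n. continuous_on UNIV (h n)" and hlim: "\<And>x. (\<lambda>n. h n x) \<longlonglongrightarrow> g x"
  obtains p where "isCont g p"
proof -
  define Osc where "Osc k = {x. \<exists>d>0. \<forall>y\<in>ball x d. \<forall>z\<in>ball x d.
      dist (g y) (g z) < inverse (real (Suc k))}" for k
  have Osc_open: "open (Osc k)" for k
    unfolding open_contains_ball
  proof
    fix x assume "x \<in> Osc k"
    then obtain d where "d > 0" and osc: "\<forall>y\<in>ball x d. \<forall>z\<in>ball x d. dist (g y) (g z) < inverse (real (Suc k))"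
      unfolding Osc_def by blast
    have "ball x d \<subseteq> Osc k"
    proof
      fix x' assume "x' \<in> ball x d"
      then have "d - dist x x' > 0" by simp
      moreover have "ball x' (d - dist x x') \<subseteq> ball x d"
      proof
        fix z assume "z \<in> ball x' (d - dist x x')"
        then show "z \<in> ball x d" using dist_triangle[of x z x'] by simp
      qed
      ultimately show "x' \<in> Osc k" using osc unfolding Osc_def by blast
    qed
    then show "\<exists>e>0. ball x e \<subseteq> Osc k" using \<open>d > 0\<close> by blast
  qed
  have Osc_dense: "UNIV \<subseteq> closure (Osc k)" for k
  proof
    fix x :: 'a
    show "x \<in> closure (Osc k)" unfolding closure_approachable
    proof (intro allI impI)
      fix e :: real assume "e > 0"
      have k_pos: "inverse (real (Suc k)) > 0" by simp
      obtain c d where cd: "ball c d \<subseteq> ball x e" "d > 0"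
        "\<And>y z. y \<in> ball c d \<Longrightarrow> z \<in> ball c d \<Longrightarrow> dist (g y) (g z) < inverse (real (Suc k))"
        by (rule pointwise_limit_of_continuous_small_oscillation[OF hc hlim k_pos \<open>e > 0\<close>, where m = x]) blast
      have "\<forall>y\<in>ball c d. \<forall>z\<in>ball c d. dist (g y) (g z) < inverse (real (Suc k))"
        using cd(3) by blast
      then have "c \<in> Osc k" unfolding Osc_def using cd(2) by blast
      moreover have "dist c x < e"
        using cd(1,2) by (metis centre_in_ball dist_commute mem_ball subsetD)
      ultimately show "\<exists>y\<in>Osc k. dist y x < e" by blast
    qed
  qed
  have "UNIV \<subseteq> closure (\<Inter> (range Osc))"
    by (rule Baire) (use Osc_open Osc_dense in auto)
  then have "\<Inter> (range Osc) \<noteq> {}" by auto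
  then obtain p where p: "\<And>k. p \<in> Osc k" by blast
  have "isCont g p" unfolding continuous_at_eps_delta
  proof (intro allI impI)
    fix e :: real assume "e > 0"
    then obtain k where k: "inverse (real (Suc k)) < e" using reals_Archimedean by blast
    obtain d where "d > 0"
      and osc: "\<forall>y\<in>ball p d. \<forall>z\<in>ball p d. dist (g y) (g z) < inverse (real (Suc k))"
      using p[of k] unfolding Osc_def by blast
    moreover have "dist (g x) (g p) < e" if "dist x p < d" for x
    proof -
      have "x \<in> ball p d" "p \<in> ball p d" using that \<open>d > 0\<close> by (auto simp: dist_commute)
      then have "dist (g x) (g p) < inverse (real (Suc k))" using osc by blast
      then show ?thesis using k by linarith
    qed
    ultimately show "\<exists>d>0. \<forall>x. dist x p < d \<longrightarrow> dist (g x) (g p) < e" by blast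
  qed
  then show thesis ..
qed

lemma nowhere_monotone_deriv_changes_sign:
  fixes f g :: "real \<Rightarrow> real"
  assumes der: "\<And>x. (f has_real_derivative g x) (at x)"
    and nm: "nowhere_monotone f" and "a < b"
  shows "\<exists>x\<in>{a..b}. g x < 0" and "\<exists>x\<in>{a..b}. g x > 0"
proof -
  have "\<exists>x\<in>{a..b}. \<exists>y\<in>{a..b}. x < y"
    using \<open>a < b\<close> by (intro bexI[of _ a] bexI[of _ b]) auto
  moreover have "is_interval {a..b}" by (rule is_interval_cc)
  ultimately have not_mono: "\<not> mono_on {a..b} f" and not_antimono: "\<not> antimono_on {a..b} f"
    using nm unfolding nowhere_monotone_def by blast+
  show "\<exists>x\<in>{a..b}. g x < 0"
  proof (rule ccontr)
    assume nonneg: "\<not> ?thesis"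
    have "mono_on {a..b} f"
    proof (rule mono_onI)
      fix r s assume "r \<in> {a..b}" "s \<in> {a..b}" "r \<le> s"
      show "f r \<le> f s"
      proof (rule DERIV_nonneg_imp_nondecreasing[OF \<open>r \<le> s\<close>])
        fix x assume "r \<le> x" "x \<le> s"
        then have "x \<in> {a..b}" using \<open>r \<in> {a..b}\<close> \<open>s \<in> {a..b}\<close> by simp
        then show "\<exists>y. DERIV f x :> y \<and> 0 \<le> y" using der nonneg by (force simp: not_less)
      qed
    qed
    with not_mono show False ..
  qed
  show "\<exists>x\<in>{a..b}. g x > 0"
  proof (rule ccontr)
    assume nonpos: "\<not> ?thesis"
    have "antimono_on {a..b} f"
    proof (rule monotone_onI)
      fix r s assume "r \<in> {a..b}" "s \<in> {a..b}" "r \<le> s"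
      show "f s \<le> f r"
      proof (rule DERIV_nonpos_imp_nonincreasing[OF \<open>r \<le> s\<close>])
        fix x assume "r \<le> x" "x \<le> s"
        then have "x \<in> {a..b}" using \<open>r \<in> {a..b}\<close> \<open>s \<in> {a..b}\<close> by simp
        then show "\<exists>y. DERIV f x :> y \<and> y \<le> 0" using der nonpos by (force simp: not_less)
      qed
    qed
    with not_antimono show False ..
  qed
qed

lemma nowhere_monotone_deriv_zero_at_continuity_point:
  fixes f g :: "real \<Rightarrow> real"
  assumes der: "\<And>x. (f has_real_derivative g x) (at x)"
    and nm: "nowhere_monotone f" and cont: "isCont g x"
  shows "g x = 0"
proof (rule ccontr)
  assume "g x \<noteq> 0"
  then consider "g x > 0" | "g x < 0" by linarith
  then show False
  proof cases
    case 1
    then obtain r where "r > 0" and pos: "\<And>y. \<bar>x - y\<bar> < r \<Longrightarrow> g y > 0"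
      using LIM_fun_gt_zero[OF cont[unfolded isCont_def]] by metis
    then obtain y where "y \<in> {x - r/2..x + r/2}" "g y < 0"
      using nowhere_monotone_deriv_changes_sign(1)[OF der nm, of "x - r/2" "x + r/2"] by auto
    moreover have "\<bar>x - y\<bar> < r" using calculation \<open>r > 0\<close> by (simp add: abs_less_iff)
    ultimately show False using pos[of y] by simp
  next
    case 2
    then obtain r where "r > 0" and neg: "\<And>y. \<bar>x - y\<bar> < r \<Longrightarrow> g y < 0"
      using LIM_fun_less_zero[OF cont[unfolded isCont_def]] by metis
    then obtain y where "y \<in> {x - r/2..x + r/2}" "g y > 0"
      using nowhere_monotone_deriv_changes_sign(2)[OF der nm, of "x - r/2" "x + r/2"] by auto
    moreover have "\<bar>x - y\<bar> < r" using calculation \<open>r > 0\<close> by (simp add: abs_less_iff)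
    ultimately show False using neg[of y] by simp
  qed
qed

theorem mainTheorem8:
  fixes f :: "real \<Rightarrow> real"
  assumes "\<forall>x. f differentiable (at x)"
    and "nowhere_monotone f"
  shows "\<not> closed {x. \<not> isCont (deriv f) x}"
proof
  assume "closed {x. \<not> isCont (deriv f) x}"
  then have cont_open: "open {x. isCont (deriv f) x}"
    by (simp add: closed_def Collect_neg_eq)
  have der: "\<And>x. (f has_real_derivative deriv f x) (at x)"
    using assms(1) DERIV_deriv_iff_real_differentiable by blast
  obtain h where "\<And>n. continuous_on UNIV (h n)" "\<And>x. (\<lambda>n. h n x) \<longlonglongrightarrow> deriv f x"
    using derivative_is_limit_of_continuous[OF der] by blast
  then obtain p where "isCont (deriv f) p"
    using pointwise_limit_of_continuous_has_continuity_point by blast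
  then obtain r where "r > 0" "ball p r \<subseteq> {x. isCont (deriv f) x}"
    using cont_open unfolding open_contains_ball by blast
  then have "\<forall>x\<in>{p - r/2..p + r/2}. deriv f x = 0"
    using nowhere_monotone_deriv_zero_at_continuity_point[OF der assms(2)]
    by (auto simp: subset_iff dist_real_def)
  then show False
    using nowhere_monotone_deriv_changes_sign(1)[OF der assms(2), of "p - r/2" "p + r/2"] \<open>r > 0\<close>
    by force
qed

end
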